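(* Let $k>0$ and $g(u;a)=u(1-u)(u-a)$. Define $$a_*^-(k)=1-\frac{2}{\sqrt{4k+1}+1},\qquad a_1^-(k)=\max\Big\{1-\frac{2}{2\sqrt k+1},0\Big\},$$ and for $0\le a\le a_*^-(k)$, $$d^-_{\min}(a,k)=\frac{2a^2k-a+2k-2(a+1)\sqrt k\sqrt{ka^2-a(2k+1)+k}}{(4k+1)^2},$$ $$d^-_{\max}(a,k)=\begin{cases}\dfrac{(1-a)^2}{4}, & a\in[0,a_1^-(k)),\\[2mm] \dfrac{2a^2k-a+2k+2(a+1)\sqrt k\sqrt{ka^2-a(2k+1)+k}}{(4k+1)^2}, & a\in[a_1^-(k),a_*^-(k)].\end{cases}$$ Then: (i) $d^-_{\min},d^-_{\max}\in C([0,a_*^-(k)]\times(0,\infty);\mathbb R)$ and $0\le d^-_{\min}(a,k)\le d^-_{\max}(a,k)\le d^-(a)$ for all $a\in[0,a_*^-(k)]$, where $d^-(a)=\max_{y\in(a,1)}g(y;a)/y$; (ii) $d^-_{\max}(a_*^-(k),k)=d^-_{\min}(a_*^-(k),k)$; (iii) $$\mathcal D^-(k)=\{(a,d)\in\mathcal H:\ a<a_*^-(k),\ d^-_{\min}(a,k)<d<d^-_{\max}(a,k)\}.$$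
   Context: Let $\mathcal H=(0,1)\times(0,\infty)$. For $k>0$, $a\in(0,1)$, $A\in(0,1)$ let $$d^\diamond(A;a)=\inf\{d>0:\ d(k+1)(A-v)-g(A;a)\ge -g(v;a)\ \text{for all }v\in[0,A]\},$$ and $$\mathcal D^-(k)=\Big\{(a,d)\in\mathcal H:\ d^\diamond(A;a)<d<\frac{g(A;a)}{A}\ \text{for some }A\in(a,1)\Big\},$$ with $g$ the cubic above. *)

theory Defs
  imports "HOL-Analysis.Analysis"
begin

definition g :: "real \<Rightarrow> real \<Rightarrow> real" where
  "g u a = u * (1 - u) * (u - a)"

definition H :: "(real \<times> real) set" where
  "H = {0<..<1} \<times> {0<..}"

definition d_diamond :: "real \<Rightarrow> real \<Rightarrow> real \<Rightarrow> real" where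
  "d_diamond k A a = Inf {d. d > 0 \<and>
      (\<forall>v\<in>{0..A}. d * (k + 1) * (A - v) - g A a \<ge> - g v a)}"

definition D_minus :: "real \<Rightarrow> (real \<times> real) set" where
  "D_minus k = {(a, d). (a, d) \<in> H \<and>
      (\<exists>A\<in>{a<..<1}. d_diamond k A a < d \<and> d < g A a / A)}"

definition d_minus :: "real \<Rightarrow> real" where
  "d_minus a = Sup ((\<lambda>y. g y a / y) ` {a<..<1})"

definition a_star_minus :: "real \<Rightarrow> real" where
  "a_star_minus k = 1 - 2 / (sqrt (4 * k + 1) + 1)"

definition a1_minus :: "real \<Rightarrow> real" where
  "a1_minus k = max (1 - 2 / (2 * sqrt k + 1)) 0"

definition d_min :: "real \<Rightarrow> real \<Rightarrow> real" where
  "d_min a k = (2 * a^2 * k - a + 2 * k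
      - 2 * (a + 1) * sqrt k * sqrt (k * a^2 - a * (2 * k + 1) + k)) / (4 * k + 1)^2"

definition d_max :: "real \<Rightarrow> real \<Rightarrow> real" where
  "d_max a k = (if a < a1_minus k then (1 - a)^2 / 4
     else (2 * a^2 * k - a + 2 * k
      + 2 * (a + 1) * sqrt k * sqrt (k * a^2 - a * (2 * k + 1) + k)) / (4 * k + 1)^2)"

end

(*
  Since g(A) - g(v) = (A - v) s(A, v) with s the secant slope of g, d_diamond(A; a) is the
  maximum of s(A, .) on [0, A] divided by k + 1, while g(A)/A = (1 - A)(A - a) =: U(A).
  So (a, d) lies in D^-(k) iff some A in (a, 1) has max s(A, .) < (k + 1) d < (k + 1) U(A).
  For A >= (1 + a)/3 that maximum is q(A), the unconstrained maximum of the quadratic s(A, .),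
  and q(A) < (k + 1) U(A) holds exactly between the two roots A_- <= A_+ of a quadratic whose
  discriminant is a positive multiple of k a^2 - a (2k + 1) + k, i.e. positive iff a < a_*^-(k);
  a smaller admissible A forces the same inequality at (1 + a)/3. As q decreases on
  [(1 + a)/3, 1] and U decreases past its vertex (1 + a)/2, the admissible d fill the interval
  between U(A_+) = d_min and U(max(A_-, (1 + a)/2)) = d_max; the case split at a_1^- in d_max
  is where A_- crosses the vertex.
*)

theory Submission
  imports Defs
begin

definition secant :: "real \<Rightarrow> real \<Rightarrow> real \<Rightarrow> real" where
  "secant a A v = (1 + a) * (A + v) - (A^2 + A * v + v^2) - a"
definition secant_max :: "real \<Rightarrow> real \<Rightarrow> real" where
  "secant_max a A = (1 + a - A) * (1 + a + 3 * A) / 4 - a"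
definition g_ratio :: "real \<Rightarrow> real \<Rightarrow> real" where
  "g_ratio a A = (1 - A) * (A - a)"
definition disc :: "real \<Rightarrow> real \<Rightarrow> real" where
  "disc k a = k * a^2 - a * (2 * k + 1) + k"
definition root_lo :: "real \<Rightarrow> real \<Rightarrow> real" where
  "root_lo k a = ((2 * k + 1) * (1 + a) - 2 * sqrt k * sqrt (disc k a)) / (4 * k + 1)"
definition root_hi :: "real \<Rightarrow> real \<Rightarrow> real" where
  "root_hi k a = ((2 * k + 1) * (1 + a) + 2 * sqrt k * sqrt (disc k a)) / (4 * k + 1)"

definition admissible :: "real \<Rightarrow> real \<Rightarrow> real \<Rightarrow> real \<Rightarrow> bool" where
  "admissible k a d A \<longleftrightarrow>
     a < A \<and> A < 1 \<and> (\<forall>v\<in>{0..A}. secant a A v < (k + 1) * d) \<and> d < g_ratio a A"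

lemma g_diff_eq_secant: "g A a - g v a = (A - v) * secant a A v"
  unfolding g_def secant_def by (simp add: algebra_simps power2_eq_square)

lemma g_div_eq_g_ratio: "A \<noteq> 0 \<Longrightarrow> g A a / A = g_ratio a A"
  unfolding g_def g_ratio_def by (simp add: field_simps)

lemma secant_at_zero: "secant a A 0 = g_ratio a A"
  unfolding secant_def g_ratio_def by (simp add: algebra_simps power2_eq_square)

lemma secant_le_secant_max: "secant a A v \<le> secant_max a A"
proof -
  have "secant_max a A - secant a A v = (v - (1 + a - A) / 2)^2"
    unfolding secant_max_def secant_def by (simp add: field_simps power2_eq_square)
  then show ?thesis by (metis diff_ge_0_iff_ge zero_le_power2)
qed

lemma secant_at_vertex: "secant a A ((1 + a - A) / 2) = secant_max a A"
  unfolding secant_max_def secant_def by (simp add: field_simps power2_eq_square)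

lemma secant_max_antimono:
  assumes "(1 + a) / 3 \<le> y" "y \<le> x" shows "secant_max a x \<le> secant_max a y"
proof -
  have "secant_max a y - secant_max a x = (x - y) * (3 * (x + y) - 2 * (1 + a)) / 4"
    unfolding secant_max_def by (simp add: field_simps)
  moreover have "0 \<le> (x - y) * (3 * (x + y) - 2 * (1 + a))"
    using assms by (intro mult_nonneg_nonneg) auto
  ultimately show ?thesis by linarith
qed

lemma secant_max_one_minus: "secant_max a (1 - a) = a * (1 - a)"
  unfolding secant_max_def by (simp add: field_simps power2_eq_square)

lemma secant_diag_self: "secant a a a = a * (1 - a)"
  unfolding secant_def by (simp add: algebra_simps power2_eq_square)

lemma secant_diag_mono:
  assumes "y \<le> x" "3 * (x + y) \<le> 2 * (1 + a)" shows "secant a y y \<le> secant a x x"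
proof -
  have "secant a x x - secant a y y = (x - y) * (2 * (1 + a) - 3 * (x + y))"
    unfolding secant_def by (simp add: algebra_simps power2_eq_square)
  moreover have "0 \<le> (x - y) * (2 * (1 + a) - 3 * (x + y))"
    using assms by (intro mult_nonneg_nonneg) auto
  ultimately show ?thesis by linarith
qed

lemma secant_diag_third: "secant a ((1 + a) / 3) ((1 + a) / 3) = secant_max a ((1 + a) / 3)"
  unfolding secant_max_def secant_def by (simp add: field_simps power2_eq_square)

lemma g_ratio_le_vertex: "g_ratio a A \<le> (1 - a)^2 / 4"
proof -
  have "(1 - a)^2 / 4 - g_ratio a A = (A - (1 + a) / 2)^2"
    unfolding g_ratio_def by (simp add: field_simps power2_eq_square)
  then show ?thesis by (metis diff_ge_0_iff_ge zero_le_power2)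
qed

lemma g_ratio_vertex: "g_ratio a ((1 + a) / 2) = (1 - a)^2 / 4"
  unfolding g_ratio_def by (simp add: field_simps power2_eq_square)

lemma g_ratio_diff: "g_ratio a y - g_ratio a x = (x - y) * (x + y - (1 + a))"
  unfolding g_ratio_def by (simp add: algebra_simps)

lemma g_ratio_antimono:
  assumes "(1 + a) / 2 \<le> y" "y \<le> x" shows "g_ratio a x \<le> g_ratio a y"
proof -
  have "0 \<le> (x - y) * (x + y - (1 + a))" using assms by (intro mult_nonneg_nonneg) auto
  then show ?thesis using g_ratio_diff[of a y x] by linarith
qed

lemma g_ratio_strict_antimono:
  assumes "(1 + a) / 2 \<le> y" "y < x" shows "g_ratio a x < g_ratio a y"
proof -
  have "0 < (x - y) * (x + y - (1 + a))" using assms by (intro mult_pos_pos) auto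
  then show ?thesis using g_ratio_diff[of a y x] by linarith
qed

lemma g_ratio_le_at_max_vertex:
  assumes "m \<le> (1 + a) / 2 \<or> m \<le> A"
  shows "g_ratio a A \<le> g_ratio a (max m ((1 + a) / 2))"
proof (cases "m \<le> (1 + a) / 2")
  case True
  then show ?thesis using g_ratio_le_vertex[of a A] g_ratio_vertex[of a] by (simp add: max_absorb2)
next
  case False
  then show ?thesis using assms g_ratio_antimono[of a m A] by simp
qed

lemma g_ratio_level_point:
  assumes "0 < d" "d < (1 - a)^2 / 4" "a < 1"
  obtains A where "(1 + a) / 2 < A" "A < 1" "g_ratio a A = d"
proof
  define w where "w = sqrt ((1 - a)^2 - 4 * d)"
  have w: "0 < w" "w^2 = (1 - a)^2 - 4 * d" using assms(2) by (auto simp: w_def)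
  then have "w < 1 - a" using assms by (smt (verit) power_mono)
  then show "(1 + a + w) / 2 < 1" by simp
  show "(1 + a) / 2 < (1 + a + w) / 2" using w by simp
  show "g_ratio a ((1 + a + w) / 2) = d"
    using w unfolding g_ratio_def by (simp add: field_simps power2_eq_square)
qed

lemma d_diamond_eq_max:
  assumes k: "0 < k" and a: "0 \<le> a" and aA: "a < A" and A1: "A < 1"
    and v0: "v0 \<in> {0..A}" and v0_max: "\<forall>v\<in>{0..A}. secant a A v \<le> secant a A v0"
  shows "d_diamond k A a = secant a A v0 / (k + 1)"
proof -
  define M where "M = secant a A v0"
  have A0: "0 < A" using a aA by simp
  have "0 < secant a A 0" unfolding secant_at_zero g_ratio_def using aA A1 by simp
  then have M0: "0 < M" using v0_max A0 unfolding M_def by force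
  have cond: "d * (k + 1) * (A - v) - g A a \<ge> - g v a
      \<longleftrightarrow> (A - v) * secant a A v \<le> (A - v) * ((k + 1) * d)" for d v
    using g_diff_eq_secant[of A a v] by (auto simp: algebra_simps)
  have "{d. d > 0 \<and> (\<forall>v\<in>{0..A}. d * (k + 1) * (A - v) - g A a \<ge> - g v a)} = {M / (k + 1)..}"
  proof (intro set_eqI iffI)
    fix d assume "d \<in> {d. d > 0 \<and> (\<forall>v\<in>{0..A}. d * (k + 1) * (A - v) - g A a \<ge> - g v a)}"
    then have "secant a A v \<le> (k + 1) * d" if "v \<in> {0..<A}" for v
      using that cond[where d = d and v = v] by auto
    \<comment> \<open>the constraint is void at \<open>v = A\<close>; continuity recovers it there\<close>
    moreover have "continuous_on {0..A} (secant a A)"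
      unfolding secant_def by (intro continuous_intros)
    ultimately have "M \<le> (k + 1) * d"
      using continuous_le_on_closure[of "{0..<A}" "secant a A" v0] v0 A0 by (auto simp: M_def)
    then show "d \<in> {M / (k + 1)..}" using k by (simp add: field_simps)
  next
    fix d assume "d \<in> {M / (k + 1)..}"
    then have dM: "M \<le> (k + 1) * d" using k by (simp add: field_simps)
    then have "0 < d" using M0 k by (smt (verit) mult_nonneg_nonpos)
    moreover have "(A - v) * secant a A v \<le> (A - v) * ((k + 1) * d)" if "v \<in> {0..A}" for v
    proof -
      have "secant a A v \<le> (k + 1) * d" using that v0_max dM order_trans unfolding M_def by blast
      then show ?thesis using that by (intro mult_left_mono) auto
    qed
    ultimately show "d \<in> {d. d > 0 \<and> (\<forall>v\<in>{0..A}. d * (k + 1) * (A - v) - g A a \<ge> - g v a)}"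
      using cond by auto
  qed
  then show ?thesis unfolding d_diamond_def M_def by simp
qed

lemma d_diamond_less_iff:
  assumes k: "0 < k" and a: "0 \<le> a" and aA: "a < A" and A1: "A < 1"
  shows "d_diamond k A a < d \<longleftrightarrow> (\<forall>v\<in>{0..A}. secant a A v < (k + 1) * d)"
proof -
  have cont: "continuous_on {0..A} (secant a A)" unfolding secant_def by (intro continuous_intros)
  have "{0..A} \<noteq> {}" using a aA by simp
  then obtain v0 where v0: "v0 \<in> {0..A}" and v0_max: "\<forall>v\<in>{0..A}. secant a A v \<le> secant a A v0"
    using continuous_attains_sup[OF compact_Icc _ cont] by blast
  have "d_diamond k A a < d \<longleftrightarrow> secant a A v0 < (k + 1) * d"
    unfolding d_diamond_eq_max[OF assms v0 v0_max]
    using k by (simp add: pos_divide_less_eq mult.commute)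
  also have "\<dots> \<longleftrightarrow> (\<forall>v\<in>{0..A}. secant a A v < (k + 1) * d)"
    using v0 v0_max by force
  finally show ?thesis .
qed

lemma disc_eq_pos_mult:
  assumes k: "0 < k" and a: "a < 1"
  obtains p where "0 < p" "disc k a = p * (a_star_minus k - a)"
proof
  define s where "s = sqrt (4 * k + 1)"
  have s: "1 < s" "s^2 = 4 * k + 1" using k by (auto simp: s_def)
  have "(s - 1) * a < (s - 1) * 1" using s a by (intro mult_strict_left_mono) auto
  then have "0 < (s + 1) - (s - 1) * a" by (smt (verit))
  then show "0 < (s + 1) * ((s + 1) - (s - 1) * a) / 4" using s by simp
  have a_star: "(s + 1) * a_star_minus k = s - 1"
    using s unfolding a_star_minus_def s_def[symmetric] by (simp add: field_simps)
  have "(s + 1) * ((s + 1) - (s - 1) * a) / 4 * (a_star_minus k - a)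
      = ((s + 1) - (s - 1) * a) * ((s + 1) * a_star_minus k - (s + 1) * a) / 4"
    by (simp add: algebra_simps)
  also have "\<dots> = ((s + 1) - (s - 1) * a) * ((s - 1) - (s + 1) * a) / 4"
    by (simp only: a_star)
  also have "((s + 1) - (s - 1) * a) * ((s - 1) - (s + 1) * a) = 4 * disc k a"
    unfolding disc_def using s(2) by (simp add: algebra_simps power2_eq_square)
  finally show "disc k a = (s + 1) * ((s + 1) - (s - 1) * a) / 4 * (a_star_minus k - a)" by simp
qed

lemma a_star_minus_bounds: "0 < k \<Longrightarrow> 0 < a_star_minus k \<and> a_star_minus k < 1"
  unfolding a_star_minus_def by (simp add: add_pos_pos)

lemma disc_pos_iff:
  assumes "0 < k" "a < 1" shows "0 < disc k a \<longleftrightarrow> a < a_star_minus k"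
proof -
  obtain p where "0 < p" "disc k a = p * (a_star_minus k - a)"
    using disc_eq_pos_mult[OF assms] .
  then show ?thesis by (simp add: zero_less_mult_iff)
qed

lemma disc_nonneg:
  assumes "0 < k" "a \<le> a_star_minus k" shows "0 \<le> disc k a"
proof -
  have "a < 1" using assms a_star_minus_bounds[of k] by linarith
  then obtain p where "0 < p" "disc k a = p * (a_star_minus k - a)"
    using disc_eq_pos_mult assms(1) by blast
  then show ?thesis using assms(2) by simp
qed

lemma disc_a_star_minus:
  assumes "0 < k" shows "disc k (a_star_minus k) = 0"
proof -
  obtain p where "disc k (a_star_minus k) = p * (a_star_minus k - a_star_minus k)"
    using disc_eq_pos_mult[OF assms] a_star_minus_bounds[OF assms] by blast
  then show ?thesis by simp
qed

lemma sqrt_disc_sq: "0 \<le> k \<Longrightarrow> 0 \<le> disc k a \<Longrightarrow> (sqrt k * sqrt (disc k a))^2 = k * disc k a"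
  by (simp add: power_mult_distrib)

lemma root_lo_eq: "0 \<le> k \<Longrightarrow>
    (4 * k + 1) * root_lo k a = (2 * k + 1) * (1 + a) - 2 * (sqrt k * sqrt (disc k a))"
  unfolding root_lo_def by (simp add: field_simps)

lemma root_hi_eq: "0 \<le> k \<Longrightarrow>
    (4 * k + 1) * root_hi k a = (2 * k + 1) * (1 + a) + 2 * (sqrt k * sqrt (disc k a))"
  unfolding root_hi_def by (simp add: field_simps)

lemma secant_max_gap_eq:
  "4 * (4 * k + 1) * (secant_max a A - (k + 1) * g_ratio a A)
     = ((4 * k + 1) * A - (2 * k + 1) * (1 + a))^2 - 4 * k * disc k a"
  unfolding secant_max_def g_ratio_def disc_def by (simp add: field_simps power2_eq_square)

lemma secant_max_less_iff:
  assumes k: "0 < k"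
  shows "secant_max a A < (k + 1) * g_ratio a A
           \<longleftrightarrow> 0 < disc k a \<and> root_lo k a < A \<and> A < root_hi k a"
proof -
  define X where "X = (4 * k + 1) * A - (2 * k + 1) * (1 + a)"
  define r where "r = sqrt k * sqrt (disc k a)"
  have "secant_max a A < (k + 1) * g_ratio a A
          \<longleftrightarrow> 4 * (4 * k + 1) * (secant_max a A - (k + 1) * g_ratio a A) < 0"
    using k by (simp add: mult_less_0_iff)
  also have "\<dots> \<longleftrightarrow> X^2 < 4 * k * disc k a"
    unfolding secant_max_gap_eq X_def by simp
  finally have gap: "secant_max a A < (k + 1) * g_ratio a A \<longleftrightarrow> X^2 < 4 * k * disc k a" .
  show ?thesis
  proof (cases "0 < disc k a")
    case True
    have r0: "0 \<le> r" unfolding r_def using k True by simp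
    have "(2 * r)^2 = 4 * k * disc k a"
      using sqrt_disc_sq[of k a] k True by (simp add: r_def power_mult_distrib mult.assoc)
    then have "X^2 < 4 * k * disc k a \<longleftrightarrow> X^2 < (2 * r)^2" by (simp add: mult.assoc)
    also have "\<dots> \<longleftrightarrow> \<bar>X\<bar> < 2 * r"
      using abs_le_square_iff[of "2 * r" X] r0 by (auto simp: not_le[symmetric])
    also have "\<dots> \<longleftrightarrow> (4 * k + 1) * root_lo k a < (4 * k + 1) * A
                        \<and> (4 * k + 1) * A < (4 * k + 1) * root_hi k a"
      unfolding root_lo_eq[OF less_imp_le[OF k]] root_hi_eq[OF less_imp_le[OF k]] X_def r_def
      by linarith
    also have "\<dots> \<longleftrightarrow> root_lo k a < A \<and> A < root_hi k a" using k by simp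
    finally show ?thesis using gap True by simp
  next
    case False
    then have "4 * k * disc k a \<le> 0" using k by (simp add: mult_nonneg_nonpos)
    then have "4 * k * disc k a \<le> X^2" using zero_le_power2[of X] by linarith
    then show ?thesis using gap False by simp
  qed
qed

lemma secant_max_root_hi:
  assumes "0 \<le> k" "0 \<le> disc k a"
  shows "secant_max a (root_hi k a) = (k + 1) * g_ratio a (root_hi k a)"
proof -
  have "4 * (4 * k + 1) * (secant_max a (root_hi k a) - (k + 1) * g_ratio a (root_hi k a)) = 0"
    unfolding secant_max_gap_eq root_hi_eq[OF assms(1)]
    using sqrt_disc_sq[OF assms] by (simp add: power_mult_distrib)
  then show ?thesis using assms(1) by simp
qed

lemma g_ratio_root_hi:
  assumes k: "0 \<le> k" and D: "0 \<le> disc k a"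
  shows "g_ratio a (root_hi k a) = d_min a k"
proof -
  define r where "r = sqrt k * sqrt (disc k a)"
  have "(4 * k + 1)^2 * g_ratio a (root_hi k a)
      = ((4 * k + 1) - (4 * k + 1) * root_hi k a) * ((4 * k + 1) * root_hi k a - (4 * k + 1) * a)"
    unfolding g_ratio_def by (simp add: algebra_simps power2_eq_square)
  also have "\<dots> = 2 * a^2 * k - a + 2 * k - 2 * (a + 1) * r"
    unfolding root_hi_eq[OF k] using sqrt_disc_sq[OF k D]
    unfolding r_def disc_def by (simp add: algebra_simps power2_eq_square)
  finally show ?thesis unfolding d_min_def r_def disc_def using k by (simp add: field_simps)
qed

lemma g_ratio_root_lo:
  assumes k: "0 \<le> k" and D: "0 \<le> disc k a"
  shows "g_ratio a (root_lo k a) = (2 * a^2 * k - a + 2 * k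
      + 2 * (a + 1) * sqrt k * sqrt (k * a^2 - a * (2 * k + 1) + k)) / (4 * k + 1)^2"
proof -
  define r where "r = sqrt k * sqrt (disc k a)"
  have "(4 * k + 1)^2 * g_ratio a (root_lo k a)
      = ((4 * k + 1) - (4 * k + 1) * root_lo k a) * ((4 * k + 1) * root_lo k a - (4 * k + 1) * a)"
    unfolding g_ratio_def by (simp add: algebra_simps power2_eq_square)
  also have "\<dots> = 2 * a^2 * k - a + 2 * k + 2 * (a + 1) * r"
    unfolding root_lo_eq[OF k] using sqrt_disc_sq[OF k D]
    unfolding r_def disc_def by (simp add: algebra_simps power2_eq_square)
  finally show ?thesis unfolding r_def disc_def using k by (simp add: field_simps)
qed

lemma root_lo_le_root_hi: "0 \<le> k \<Longrightarrow> 0 \<le> disc k a \<Longrightarrow> root_lo k a \<le> root_hi k a"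
  unfolding root_lo_def root_hi_def by (intro divide_right_mono) auto

lemma half_le_root_hi:
  assumes "0 \<le> k" "0 \<le> disc k a" "-1 \<le> a" shows "(1 + a) / 2 \<le> root_hi k a"
proof -
  have "0 \<le> sqrt k * sqrt (disc k a)" using assms by simp
  moreover have "(4 * k + 1) * ((1 + a) / 2) = (2 * k + 1) * (1 + a) - 1 / 2 - a / 2"
    by (simp add: field_simps)
  ultimately have "(4 * k + 1) * ((1 + a) / 2) \<le> (4 * k + 1) * root_hi k a"
    unfolding root_hi_eq[OF assms(1)] using assms(3) by linarith
  then show ?thesis using assms(1) by simp
qed

lemma root_hi_le_one:
  assumes k: "0 < k" and D: "0 \<le> disc k a" and a: "0 \<le> a" "a \<le> 1"
  shows "root_hi k a \<le> 1"
proof -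
  define r where "r = sqrt k * sqrt (disc k a)"
  have "(1 - a)^2 \<le> 1 - a" using a by (simp add: power2_eq_square mult_left_le)
  then have "k * (1 - a)^2 \<le> k * (1 - a)" using k by (simp add: mult_left_mono)
  moreover have "a \<le> k * (1 - a)^2"
    using D unfolding disc_def by (simp add: algebra_simps power2_eq_square)
  ultimately have R: "0 \<le> 2 * k * (1 - a) - a" using a by linarith
  have "(2 * r)^2 = 4 * (k * disc k a)"
    using sqrt_disc_sq[of k a] k D by (simp add: r_def power_mult_distrib)
  also have "\<dots> = (2 * k * (1 - a) - a)^2 - (4 * k * a^2 + a^2)"
    unfolding disc_def by (simp add: algebra_simps power2_eq_square)
  also have "\<dots> \<le> (2 * k * (1 - a) - a)^2"
    using k by (smt (verit) mult_nonneg_nonneg zero_le_power2)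
  finally have "2 * r \<le> 2 * k * (1 - a) - a" using R by (rule power2_le_imp_le)
  then have "(4 * k + 1) * root_hi k a \<le> (4 * k + 1) * 1"
    unfolding root_hi_eq[OF less_imp_le[OF k]] r_def by (simp add: algebra_simps)
  then show ?thesis using k by simp
qed

lemma one_minus_le_root_hi:
  assumes k: "0 < k" and D: "0 \<le> disc k a" and a: "0 \<le> a"
  shows "1 - a \<le> root_hi k a"
proof -
  define r where "r = sqrt k * sqrt (disc k a)"
  have r0: "0 \<le> r" using k D by (simp add: r_def)
  have r2: "r^2 = k * disc k a" unfolding r_def using k D by (simp add: sqrt_disc_sq)
  have "k * (1 - 3 * a) - a \<le> r"
  proof (cases "k * (1 - 3 * a) - a \<le> 0")
    case True
    then show ?thesis using r0 by linarith
  next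
    case False
    have "0 < 4 * (k * (1 - 3 * a) - a) + 4 * (k * a) + a"
      using False a k by (intro add_pos_nonneg mult_pos_pos mult_nonneg_nonneg) auto
    also have "\<dots> = 4 * k * (1 - 2 * a) - 3 * a"
      by (simp add: algebra_simps)
    finally have "0 \<le> k * (4 * k * (1 - 2 * a) - 3 * a) + (k * (1 - 3 * a) - a)"
      using False k by (intro add_nonneg_nonneg mult_nonneg_nonneg) auto
    then have "0 \<le> a * (k * (4 * k * (1 - 2 * a) - 3 * a) + (k * (1 - 3 * a) - a))"
      using a by (rule mult_nonneg_nonneg[rotated])
    also have "\<dots> = r^2 - (k * (1 - 3 * a) - a)^2"
      unfolding r2 disc_def by (simp add: algebra_simps power2_eq_square)
    finally have "(k * (1 - 3 * a) - a)^2 \<le> r^2" by simp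
    then show ?thesis using r0 by (rule power2_le_imp_le)
  qed
  moreover have "(4 * k + 1) * (1 - a) = (2 * k + 1) * (1 + a) + 2 * (k * (1 - 3 * a) - a)"
    by (simp add: algebra_simps)
  ultimately have "(4 * k + 1) * (1 - a) \<le> (4 * k + 1) * root_hi k a"
    unfolding root_hi_eq[OF less_imp_le[OF k]] r_def by (smt (verit))
  then show ?thesis using k by simp
qed

lemma half_le_root_lo_iff:
  assumes k: "0 < k" and D: "0 \<le> disc k a" and a: "0 \<le> a" "a \<le> 1"
  shows "(1 + a) / 2 \<le> root_lo k a \<longleftrightarrow> 1 - 2 / (2 * sqrt k + 1) \<le> a"
proof -
  define t where "t = sqrt k"
  define r where "r = t * sqrt (disc k a)"
  define L where "L = (4 * k + 1) * root_lo k a"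
  have t: "0 \<le> t" "t^2 = k" using k by (auto simp: t_def)
  have r: "0 \<le> r" "r^2 = k * disc k a"
    using sqrt_disc_sq[of k a] k D by (auto simp: r_def t_def)
  have pos1: "0 < 1 + a + 4 * r" using r a by simp
  have "0 \<le> 2 * t * (1 - a)" using t a by simp
  then have "0 < 1 + a + 2 * t * (1 - a)" using a by simp
  then have pos2: "0 < (4 * k + 1) * (1 + a + 2 * t * (1 - a))" using k by simp
  have "2 * L - (4 * k + 1) * (1 + a) = (1 + a) - 4 * r"
    using root_lo_eq[of k a] k by (simp add: L_def r_def t_def algebra_simps)
  then have "(2 * L - (4 * k + 1) * (1 + a)) * (1 + a + 4 * r)
      = ((1 + a) - 4 * r) * (1 + a + 4 * r)"
    by (simp only:)
  also have "\<dots> = (1 + a)^2 - 16 * r^2"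
    by (simp add: algebra_simps power2_eq_square)
  also have "\<dots> = (4 * k + 1) * (1 + a + 2 * t * (1 - a)) * ((2 * t + 1) * a - (2 * t - 1))"
    unfolding r(2) disc_def t(2)[symmetric] by (simp add: algebra_simps power2_eq_square)
  finally have key: "(2 * L - (4 * k + 1) * (1 + a)) * (1 + a + 4 * r)
      = (4 * k + 1) * (1 + a + 2 * t * (1 - a)) * ((2 * t + 1) * a - (2 * t - 1))" .
  have "(1 + a) / 2 \<le> root_lo k a \<longleftrightarrow> (4 * k + 1) * (1 + a) \<le> (4 * k + 1) * (2 * root_lo k a)"
    using k by (subst mult_le_cancel_left_pos) auto
  also have "\<dots> \<longleftrightarrow> 0 \<le> 2 * L - (4 * k + 1) * (1 + a)"
    by (simp add: L_def algebra_simps)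
  also have "\<dots> \<longleftrightarrow> 0 \<le> (2 * L - (4 * k + 1) * (1 + a)) * (1 + a + 4 * r)"
    using pos1 by (simp add: zero_le_mult_iff)
  also have "\<dots> \<longleftrightarrow> 0 \<le> (2 * t + 1) * a - (2 * t - 1)"
    unfolding key using mult_le_cancel_left_pos[OF pos2, of 0] by simp
  also have "\<dots> \<longleftrightarrow> 1 - 2 / (2 * t + 1) \<le> a"
    using t(1) by (simp add: field_simps)
  finally show ?thesis by (simp add: t_def)
qed

lemma d_max_eq:
  assumes k: "0 < k" and D: "0 \<le> disc k a" and a: "0 \<le> a" "a \<le> 1"
  shows "d_max a k = g_ratio a (max (root_lo k a) ((1 + a) / 2))"
proof (cases "a < a1_minus k")
  case True
  then have "root_lo k a < (1 + a) / 2"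
    using half_le_root_lo_iff[OF assms] a unfolding a1_minus_def by auto
  then show ?thesis using True by (simp add: d_max_def g_ratio_vertex max_absorb2)
next
  case False
  then have "(1 + a) / 2 \<le> root_lo k a"
    using half_le_root_lo_iff[OF assms] unfolding a1_minus_def by auto
  then show ?thesis
    using False g_ratio_root_lo[OF less_imp_le[OF k] D] by (simp add: d_max_def max_absorb1)
qed

lemma d_min_d_max_bounds:
  assumes k: "0 < k" and D: "0 \<le> disc k a" and a: "0 \<le> a" "a \<le> 1"
  shows "0 \<le> d_min a k \<and> d_min a k \<le> d_max a k \<and> d_max a k \<le> (1 - a)^2 / 4"
proof -
  have k0: "0 \<le> k" using k by simp
  have half: "(1 + a) / 2 \<le> root_hi k a" using half_le_root_hi[OF k0 D] a by simp
  have "0 \<le> g_ratio a (root_hi k a)"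
    unfolding g_ratio_def using half a root_hi_le_one[OF k D a] by simp
  moreover have "g_ratio a (root_hi k a) \<le> g_ratio a (max (root_lo k a) ((1 + a) / 2))"
    using half root_lo_le_root_hi[OF k0 D] by (intro g_ratio_antimono) auto
  ultimately show ?thesis
    unfolding d_max_eq[OF assms] g_ratio_root_hi[OF k0 D, symmetric]
    using g_ratio_le_vertex by blast
qed

lemma d_minus_eq:
  assumes "0 \<le> a" "a < 1" shows "d_minus a = (1 - a)^2 / 4"
  unfolding d_minus_def
proof (rule cSup_eq_maximum)
  have "(1 - a)^2 / 4 = g ((1 + a) / 2) a / ((1 + a) / 2)"
    using assms g_div_eq_g_ratio[of "(1 + a) / 2" a] by (simp add: g_ratio_vertex)
  moreover have "(1 + a) / 2 \<in> {a<..<1}" using assms by simp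
  ultimately show "(1 - a)^2 / 4 \<in> (\<lambda>y. g y a / y) ` {a<..<1}" by blast
next
  fix x assume "x \<in> (\<lambda>y. g y a / y) ` {a<..<1}"
  then obtain y where "y \<in> {a<..<1}" "x = g y a / y" by auto
  then have "x = g_ratio a y" using assms g_div_eq_g_ratio[of y a] by auto
  then show "x \<le> (1 - a)^2 / 4" using g_ratio_le_vertex by simp
qed

lemma d_max_a_star_minus: "0 < k \<Longrightarrow> d_max (a_star_minus k) k = d_min (a_star_minus k) k"
proof -
  assume k: "0 < k"
  define a where "a = a_star_minus k"
  have D: "disc k a = 0" unfolding a_def using disc_a_star_minus[OF k] .
  have a: "0 \<le> a" "a \<le> 1" using a_star_minus_bounds[OF k] by (simp_all add: a_def)
  have "root_lo k a = root_hi k a" by (simp add: root_lo_def root_hi_def D)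
  moreover have "(1 + a) / 2 \<le> root_hi k a" using half_le_root_hi[of k a] k D a by simp
  ultimately have "d_max a k = g_ratio a (root_hi k a)"
    using d_max_eq[of k a] k D a by simp
  then show ?thesis using g_ratio_root_hi[of k a] k D by (simp add: a_def)
qed

lemma continuous_on_d_min: "continuous_on {(a, k). 0 < k} (\<lambda>(a, k). d_min a k)"
  unfolding d_min_def case_prod_beta' by (intro continuous_intros) (auto simp: add_pos_pos)

lemma continuous_on_d_max:
  "continuous_on {(a, k). 0 < k \<and> 0 \<le> a \<and> a \<le> a_star_minus k} (\<lambda>(a, k). d_max a k)"
proof (rule continuous_on_eq)
  show "continuous_on {(a, k). 0 < k \<and> 0 \<le> a \<and> a \<le> a_star_minus k}
      (\<lambda>(a, k). g_ratio a (max (root_lo k a) ((1 + a) / 2)))"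
    unfolding g_ratio_def root_lo_def disc_def case_prod_beta'
    by (intro continuous_intros) (auto simp: add_pos_pos)
next
  fix x assume "x \<in> {(a, k). 0 < k \<and> 0 \<le> a \<and> a \<le> a_star_minus k}"
  then obtain a k where x: "x = (a, k)" and k: "0 < k" and a: "0 \<le> a" "a \<le> a_star_minus k"
    by blast
  have "a \<le> 1" using a a_star_minus_bounds[OF k] by simp
  then show "(\<lambda>(a, k). g_ratio a (max (root_lo k a) ((1 + a) / 2))) x = (\<lambda>(a, k). d_max a k) x"
    using d_max_eq[OF k disc_nonneg[OF k a(2)] a(1)] x by simp
qed

text \<open>The quadratic \<open>f x = (k + 1) * g_ratio a x - secant a x x\<close> is \<open>\<le> 0\<close> at \<open>a\<close> and
  positive at \<open>A\<close>. For \<open>k \<ge> 2\<close> it increases on \<open>[A, (1 + a) / 3]\<close>; for \<open>k < 2\<close> it is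
  convex, so it cannot drop below its chord through \<open>a\<close> and \<open>A\<close>.\<close>

lemma secant_max_less_at_third:
  assumes k: "0 < k" and a: "0 \<le> a" and aA: "a < A" and AB: "A < (1 + a) / 3"
    and gap: "secant a A A < (k + 1) * g_ratio a A"
  shows "secant_max a ((1 + a) / 3) < (k + 1) * g_ratio a ((1 + a) / 3)"
proof -
  define B where "B = (1 + a) / 3"
  define f where "f x = (k + 1) * g_ratio a x - secant a x x" for x
  have f_eq: "f x = (k - 1) * (1 + a) * x - (k - 2) * x^2 - k * a" for x
    unfolding f_def g_ratio_def secant_def by (simp add: algebra_simps power2_eq_square)
  have AB': "A < B" and a_half: "a < 1 / 2" using AB aA by (simp_all add: B_def field_simps)
  have fa: "f a \<le> 0" using a a_half by (simp add: f_def g_ratio_def secant_diag_self)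
  have fA: "0 < f A" using gap by (simp add: f_def)
  have "0 < f B"
  proof (cases "2 \<le> k")
    case True
    have "(k - 2) * (B + A) \<le> (k - 2) * (2 * B)" using True AB' by (intro mult_left_mono) auto
    moreover have "(k - 1) * (1 + a) - (k - 2) * (2 * B) = (k + 1) * (1 + a) / 3"
      by (simp add: B_def field_simps)
    moreover have "0 < (k + 1) * (1 + a) / 3" using k a by simp
    ultimately have "0 < (B - A) * ((k - 1) * (1 + a) - (k - 2) * (B + A))"
      using AB' by (intro mult_pos_pos) auto
    also have "\<dots> = f B - f A" unfolding f_eq by (simp add: algebra_simps power2_eq_square)
    finally show ?thesis using fA by simp
  next
    case False
    have "0 \<le> (2 - k) * (A - a) * (B - A) * (B - a)" using False aA AB' by simp
    also have "\<dots> = (A - a) * f B + (B - A) * f a - (B - a) * f A"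
      unfolding f_eq by (simp add: algebra_simps power2_eq_square)
    finally have "(B - a) * f A - (B - A) * f a \<le> (A - a) * f B" by simp
    moreover have "(B - A) * f a \<le> 0" using fa AB' by (simp add: mult_nonneg_nonpos)
    moreover have "0 < (B - a) * f A" using fA aA AB' by simp
    ultimately have "0 < (A - a) * f B" by linarith
    then show ?thesis using aA by (simp add: zero_less_mult_iff)
  qed
  then show ?thesis using secant_diag_third[of a] by (simp add: f_def B_def)
qed

lemma admissible_root_bounds:
  assumes k: "0 < k" and a: "0 \<le> a" and adm: "admissible k a d A"
  shows "0 < disc k a \<and> (root_lo k a < A \<or> root_lo k a < (1 + a) / 3)
      \<and> secant_max a (root_hi k a) < (k + 1) * d"
proof -
  have aA: "a < A" and A1: "A < 1" and sec: "\<forall>v\<in>{0..A}. secant a A v < (k + 1) * d"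
    and "d < g_ratio a A" using adm by (simp_all add: admissible_def)
  then have dA: "(k + 1) * d < (k + 1) * g_ratio a A" using k by simp
  show ?thesis
  proof (cases "(1 + a) / 3 \<le> A")
    case True
    have "(1 + a - A) / 2 \<in> {0..A}" using True A1 a by (auto simp: field_simps)
    with sec have qA: "secant_max a A < (k + 1) * d" unfolding secant_at_vertex[symmetric] by blast
    then have "0 < disc k a \<and> root_lo k a < A \<and> A < root_hi k a"
      using dA secant_max_less_iff[OF k] by (meson less_trans)
    moreover from this have "secant_max a (root_hi k a) \<le> secant_max a A"
      using True by (intro secant_max_antimono) auto
    ultimately show ?thesis using qA by auto
  next
    case False
    have "secant a A A < (k + 1) * d" using sec aA a by auto
    then have "secant_max a ((1 + a) / 3) < (k + 1) * g_ratio a ((1 + a) / 3)"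
      using dA secant_max_less_at_third[OF k a aA] False by simp
    then have D: "0 < disc k a" and lo: "root_lo k a < (1 + a) / 3"
      using secant_max_less_iff[OF k] by auto
    have "(1 + a) / 3 \<le> 1 - a" using aA False by (simp add: field_simps)
    then have "secant_max a (root_hi k a) \<le> secant_max a (1 - a)"
      using one_minus_le_root_hi[OF k less_imp_le[OF D] a] by (intro secant_max_antimono) auto
    also have "\<dots> = secant a a a" by (simp add: secant_max_one_minus secant_diag_self)
    also have "\<dots> \<le> secant a A A"
      using aA False by (intro secant_diag_mono) (auto simp: field_simps)
    also have "\<dots> < (k + 1) * d" by fact
    finally show ?thesis using D lo by simp
  qed
qed

lemma admissible_imp_bounds:
  assumes k: "0 < k" and a: "0 \<le> a" and adm: "admissible k a d A"
  shows "0 < disc k a \<and> d_min a k < d \<and> d < d_max a k"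
proof -
  have roots: "0 < disc k a" "root_lo k a < A \<or> root_lo k a < (1 + a) / 3"
    "secant_max a (root_hi k a) < (k + 1) * d"
    using admissible_root_bounds[OF assms] by auto
  have A: "a < A" "A < 1" "d < g_ratio a A" using adm by (simp_all add: admissible_def)
  have "(k + 1) * d_min a k < (k + 1) * d"
    using roots secant_max_root_hi[of k a] g_ratio_root_hi[of k a] k by simp
  then have "d_min a k < d" using k by simp
  moreover have "g_ratio a A \<le> d_max a k"
    unfolding d_max_eq[OF k less_imp_le[OF roots(1)] a less_imp_le[OF less_trans[OF A(1,2)]]]
    using roots(2) a by (intro g_ratio_le_at_max_vertex) (auto simp: field_simps)
  ultimately show ?thesis using roots(1) A(3) by simp
qed

lemma exists_admissible:
  assumes k: "0 < k" and a: "0 \<le> a" "a < 1" and D: "0 < disc k a" and d: "0 < d"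
    and d_min: "d_min a k < d" and d_max: "d < d_max a k"
  shows "\<exists>A. admissible k a d A"
proof -
  define A0 where "A0 = max (root_lo k a) ((1 + a) / 2)"
  have k0: "0 \<le> k" and D0: "0 \<le> disc k a" using k D by simp_all
  have d_max_A0: "d_max a k = g_ratio a A0"
    unfolding A0_def using d_max_eq[OF k D0 a(1)] a by simp
  then have "d < (1 - a)^2 / 4" using d_max g_ratio_le_vertex[of a A0] by simp
  then obtain Ad where Ad: "(1 + a) / 2 < Ad" "Ad < 1" "g_ratio a Ad = d"
    using g_ratio_level_point d a by blast
  have "A0 < Ad"
  proof (rule ccontr)
    assume "\<not> A0 < Ad"
    then have "g_ratio a A0 \<le> g_ratio a Ad" using Ad by (intro g_ratio_antimono) auto
    then show False using d_max d_max_A0 Ad by simp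
  qed
  moreover have "Ad < root_hi k a"
  proof (rule ccontr)
    assume "\<not> Ad < root_hi k a"
    then have "g_ratio a Ad \<le> g_ratio a (root_hi k a)"
      using half_le_root_hi[OF k0 D0] a g_ratio_antimono[of a "root_hi k a" Ad] by simp
    then show False using d_min g_ratio_root_hi[OF k0 D0] Ad by simp
  qed
  ultimately have "secant_max a Ad < (k + 1) * d"
    using secant_max_less_iff[OF k] D Ad unfolding A0_def by auto
  moreover have "(secant_max a \<longlongrightarrow> secant_max a Ad) (at_left Ad)"
    unfolding secant_max_def by (intro tendsto_eq_intros) auto
  \<comment> \<open>just left of \<open>Ad\<close>, \<open>g_ratio a\<close> rises above \<open>d\<close> while \<open>secant_max a\<close> stays below \<open>(k + 1) * d\<close>\<close>
  ultimately have "\<forall>\<^sub>F A in at_left Ad. secant_max a A < (k + 1) * d \<and> A \<in> {(1 + a) / 2<..<Ad}"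
    using order_tendstoD(2) eventually_at_left_real[OF Ad(1)] eventually_conj by blast
  then obtain A where A: "secant_max a A < (k + 1) * d" "(1 + a) / 2 < A" "A < Ad"
    using eventually_happens'[of "at_left Ad"] by auto
  have "a < A" "A < 1" using A Ad a by (auto simp: field_simps)
  moreover have "\<forall>v\<in>{0..A}. secant a A v < (k + 1) * d"
    using secant_le_secant_max A(1) le_less_trans by blast
  moreover have "d < g_ratio a A" using g_ratio_strict_antimono[of a A Ad] A Ad by simp
  ultimately show ?thesis unfolding admissible_def by blast
qed

lemma D_minus_eq_admissible:
  assumes k: "0 < k"
  shows "D_minus k = {(a, d). (a, d) \<in> H \<and> (\<exists>A. admissible k a d A)}"
proof -
  have iff: "d_diamond k A a < d \<and> d < g A a / A \<longleftrightarrow> admissible k a d A"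
    if "(a, d) \<in> H" "A \<in> {a<..<1}" for a d A
    using that d_diamond_less_iff[OF k, of a A d] g_div_eq_g_ratio[of A a]
    by (auto simp: H_def admissible_def)
  have "A \<in> {a<..<1}" if "admissible k a d A" for a d A
    using that by (simp add: admissible_def)
  then show ?thesis unfolding D_minus_def using iff by blast
qed

lemma D_minus_eq:
  assumes k: "0 < k"
  shows "D_minus k = {(a, d). (a, d) \<in> H \<and> a < a_star_minus k \<and> d_min a k < d \<and> d < d_max a k}"
proof -
  have "(\<exists>A. admissible k a d A) \<longleftrightarrow> a < a_star_minus k \<and> d_min a k < d \<and> d < d_max a k"
    if "(a, d) \<in> H" for a d
    using that admissible_imp_bounds[OF k, of a d] exists_admissible[OF k, of a d]
      disc_pos_iff[OF k, of a] by (auto simp: H_def)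
  then show ?thesis unfolding D_minus_eq_admissible[OF k] by auto
qed

theorem proposition2p9:
  fixes k :: real
  assumes "k > 0"
  shows "continuous_on {(a, k'). k' > 0 \<and> 0 \<le> a \<and> a \<le> a_star_minus k'}
           (\<lambda>(a, k'). d_min a k')
       \<and> continuous_on {(a, k'). k' > 0 \<and> 0 \<le> a \<and> a \<le> a_star_minus k'}
           (\<lambda>(a, k'). d_max a k')
       \<and> (\<forall>a\<in>{0..a_star_minus k}.
            0 \<le> d_min a k \<and> d_min a k \<le> d_max a k \<and> d_max a k \<le> d_minus a)
       \<and> d_max (a_star_minus k) k = d_min (a_star_minus k) k
       \<and> D_minus k = {(a, d). (a, d) \<in> H \<and> a < a_star_minus k
                              \<and> d_min a k < d \<and> d < d_max a k}"
proof -
  have "\<forall>a\<in>{0..a_star_minus k}.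
      0 \<le> d_min a k \<and> d_min a k \<le> d_max a k \<and> d_max a k \<le> d_minus a"
  proof
    fix a assume "a \<in> {0..a_star_minus k}"
    then have a: "0 \<le> a" "a < 1" and D: "0 \<le> disc k a"
      using a_star_minus_bounds[OF assms] disc_nonneg[OF assms] by auto
    then show "0 \<le> d_min a k \<and> d_min a k \<le> d_max a k \<and> d_max a k \<le> d_minus a"
      using d_min_d_max_bounds[OF assms D a(1)] d_minus_eq[OF a] by simp
  qed
  moreover have "continuous_on {(a, k'). k' > 0 \<and> 0 \<le> a \<and> a \<le> a_star_minus k'}
      (\<lambda>(a, k'). d_min a k')"
    by (rule continuous_on_subset[OF continuous_on_d_min]) auto
  ultimately show ?thesis
    using continuous_on_d_max d_max_a_star_minus[OF assms] D_minus_eq[OF assms] by blast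
qed

end
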